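(* Assume the subexponential regime $a_T/T\to0$. Let $\hat c\in\mathcal C$ satisfy the out-of-sample guarantee with speed $(a_T)$. Then either $\lim_{T\to\infty}\hat c(x,\mathbb P,T)=c(x,\mathbb P)$ for all $x\in\mathcal X,\mathbb P\in\mathcal P$, or there exists $\hat c'\in\mathcal C$ satisfying the out-of-sample guarantee with speed $(a_T)$ such that $\hat c'\preceq_{\mathcal C}\hat c$ and $\hat c'\not\equiv\hat c$.
   Context: Setting: $\Sigma=\{1,\dots,d\}$ ($d\ge2$) is finite; $\mathcal P\subset\mathbb R^d$ is the probability simplex over $\Sigma$ and $\mathcal P^o$ its relative interior (all entries positive). $\mathcal X\subset\mathbb R^n$ is compact and $\ell:\mathcal X\times\Sigma\to\mathbb R$ is continuous in $x$ for each $i$. For $x\in\mathcal X$, $\mu\in\mathbb R^d$ let $c(x,\mu)=\sum_{i\in\Sigma}\ell(x,i)\mu(i)$. Data $\xi_1,\xi_2,\dots$ are i.i.d. with law $\mathbb P\in\mathcal P$, $\mathbb P^\infty$ denotes their joint law, and $\hat{\mathbb P}_T(i)=\frac1T\sum_{t=1}^T\mathbf 1\{\xi_t=i\}$. $(a_T)_{T\ge1}$ is a sequence of positive reals with $a_T\to\infty$. A predictor is a sequence $\hat c=(\hat c(\cdot,\cdot,T))_{T\in\mathbb N}$ of functions $\mathcal X\times\mathcal P\to\mathbb R$. It is regular, written $\hat c\in\mathcal C$, if (i) the sequence $(\hat c(\cdot,\cdot,T))_T$ is uniformly bounded and equicontinuous on $\mathcal X\times\mathcal P$, and (ii) each $\hat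 c(x,\cdot,T)$ is differentiable in $\mathbb P$ and the sequence of derivative maps $(x,\mathbb P)\mapsto\nabla_{\mathbb P}\hat c(x,\mathbb P,T)$ is uniformly bounded and equicontinuous. (A sequence $(f_T)$ is equicontinuous if for every point $y$ and $\varepsilon>0$ there is a neighbourhood $U$ of $y$ with $|f_T(y)-f_T(z)|<\varepsilon$ for all $z\in U$ and all $T$.) Out-of-sample guarantee with speed $(a_T)$: for all $x\in\mathcal X$ and $\mathbb P\in\mathcal P^o$, $\limsup_{T\to\infty}\frac1{a_T}\log\mathbb P^\infty\big(c(x,\mathbb P)>\hat c(x,\hat{\mathbb P}_T,T)\big)\le-1$. Order: $\hat c_1\preceq_{\mathcal C}\hat c_2$ iff for all $(x,\mathbb P)\in\mathcal X\times\mathcal P^o$, $\limsup_{T\to\infty}\frac{|\hat c_1(x,\mathbb P,T)-c(x,\mathbb P)|}{|\hat c_2(x,\mathbb P,T)-c(x,\mathbb P)|}\le1$, with the convention $0/0=1$. Equivalence: $\hat c_1\equiv\hat c_2$ iff $|\hat c_1(x,\mathbb P,T)-c(x,\mathbb P)|/|\hat c_2(x,\mathbb P,T)-c(x,\mathbb P)|\to1$ as $T\to\infty$ for all $(x,\mathbb P)$ (convention $0/0=1$). *)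

theory Defs
  imports "HOL-Analysis.Analysis"
begin

text \<open>The alphabet Sigma is a finite type 'd; distributions are vectors in real^'d.\<close>

definition prob_simplex :: "(real ^ 'd::finite) set" where
  "prob_simplex = {p. (\<forall>i. 0 \<le> p $ i) \<and> (\<Sum>i\<in>UNIV. p $ i) = 1}"

definition prob_simplex_int :: "(real ^ 'd::finite) set" where
  "prob_simplex_int = {p. (\<forall>i. 0 < p $ i) \<and> (\<Sum>i\<in>UNIV. p $ i) = 1}"

definition cost :: "('x \<Rightarrow> 'd::finite \<Rightarrow> real) \<Rightarrow> 'x \<Rightarrow> real ^ 'd \<Rightarrow> real" where
  "cost l x mu = (\<Sum>i\<in>UNIV. l x i * mu $ i)"

definition empirical :: "(nat \<Rightarrow> 'd::finite) \<Rightarrow> nat \<Rightarrow> real ^ 'd" where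
  "empirical \<omega> T = (\<chi> i. real (card {t\<in>{..<T}. \<omega> t = i}) / real T)"

text \<open>P^infinity of an event E that depends only on the first T samples xi_1..xi_T,
  written out as the finite-dimensional marginal of the i.i.d. product law.\<close>
definition prob_iid :: "real ^ 'd::finite \<Rightarrow> nat \<Rightarrow> ((nat \<Rightarrow> 'd) \<Rightarrow> bool) \<Rightarrow> real" where
  "prob_iid P T E = (\<Sum>\<omega>\<in>{\<omega> \<in> PiE {..<T} (\<lambda>_. UNIV). E \<omega>}. \<Prod>t<T. P $ (\<omega> t))"

definition elog :: "real \<Rightarrow> ereal" where
  "elog p = (if p \<le> 0 then -\<infinity> else ereal (ln p))"

definition unif_bounded :: "'a set \<Rightarrow> (nat \<Rightarrow> 'a \<Rightarrow> 'b::real_normed_vector) \<Rightarrow> bool" where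
  "unif_bounded S f \<longleftrightarrow> (\<exists>B. \<forall>T. \<forall>y\<in>S. norm (f T y) \<le> B)"

definition equicont :: "'a::topological_space set \<Rightarrow> (nat \<Rightarrow> 'a \<Rightarrow> 'b::metric_space) \<Rightarrow> bool" where
  "equicont S f \<longleftrightarrow> (\<forall>y\<in>S. \<forall>e>0. \<exists>U. open U \<and> y \<in> U \<and>
       (\<forall>T. \<forall>z\<in>U \<inter> S. dist (f T y) (f T z) < e))"

definition regular :: "'x::euclidean_space set \<Rightarrow> ('x \<Rightarrow> real ^ 'd::finite \<Rightarrow> nat \<Rightarrow> real) \<Rightarrow> bool" where
  "regular X chat \<longleftrightarrow>
     unif_bounded (X \<times> prob_simplex) (\<lambda>T (x,p). chat x p T) \<and>
     equicont (X \<times> prob_simplex) (\<lambda>T (x,p). chat x p T) \<and>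
     (\<exists>D :: 'x \<Rightarrow> real ^ 'd \<Rightarrow> nat \<Rightarrow> real ^ 'd.
        (\<forall>T. \<forall>x\<in>X. \<forall>p\<in>prob_simplex.
           ((\<lambda>q. chat x q T) has_derivative (\<lambda>h. D x p T \<bullet> h)) (at p within prob_simplex)) \<and>
        unif_bounded (X \<times> prob_simplex) (\<lambda>T (x,p). D x p T) \<and>
        equicont (X \<times> prob_simplex) (\<lambda>T (x,p). D x p T))"

definition oos_guarantee ::
  "'x set \<Rightarrow> ('x \<Rightarrow> 'd::finite \<Rightarrow> real) \<Rightarrow> (nat \<Rightarrow> real) \<Rightarrow> ('x \<Rightarrow> real ^ 'd \<Rightarrow> nat \<Rightarrow> real) \<Rightarrow> bool" where
  "oos_guarantee X l a chat \<longleftrightarrow>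
     (\<forall>x\<in>X. \<forall>P\<in>prob_simplex_int.
        limsup (\<lambda>T. elog (prob_iid P T (\<lambda>\<omega>. cost l x P > chat x (empirical \<omega> T) T)) / ereal (a T))
          \<le> -1)"

definition err_ratio :: "real \<Rightarrow> real \<Rightarrow> ereal" where
  "err_ratio u v = (if u = 0 \<and> v = 0 then 1 else if v = 0 then \<infinity> else ereal (\<bar>u\<bar> / \<bar>v\<bar>))"

definition pred_le ::
  "'x set \<Rightarrow> ('x \<Rightarrow> 'd::finite \<Rightarrow> real) \<Rightarrow> ('x \<Rightarrow> real ^ 'd \<Rightarrow> nat \<Rightarrow> real) \<Rightarrow> ('x \<Rightarrow> real ^ 'd \<Rightarrow> nat \<Rightarrow> real) \<Rightarrow> bool" where
  "pred_le X l c1 c2 \<longleftrightarrow>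
     (\<forall>x\<in>X. \<forall>P\<in>prob_simplex_int.
        limsup (\<lambda>T. err_ratio (c1 x P T - cost l x P) (c2 x P T - cost l x P)) \<le> 1)"

definition pred_equiv ::
  "'x set \<Rightarrow> ('x \<Rightarrow> 'd::finite \<Rightarrow> real) \<Rightarrow> ('x \<Rightarrow> real ^ 'd \<Rightarrow> nat \<Rightarrow> real) \<Rightarrow> ('x \<Rightarrow> real ^ 'd \<Rightarrow> nat \<Rightarrow> real) \<Rightarrow> bool" where
  "pred_equiv X l c1 c2 \<longleftrightarrow>
     (\<forall>x\<in>X. \<forall>P\<in>prob_simplex_int.
        ((\<lambda>T. err_ratio (c1 x P T - cost l x P) (c2 x P T - cost l x P)) \<longlongrightarrow> 1) sequentially)"

end

theory Submission
  imports Defs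
begin

text \<open>If the predictor does not converge to the true cost at some \<open>(x, P)\<close>, equicontinuity
  moves the failure to a distribution \<open>P1\<close> in the interior of the simplex, where the error is at
  least \<open>4\<delta>\<close> infinitely often. If the predictor is too low there, raise it smoothly towards
  \<open>c - 2\<delta>\<close>: this keeps it regular, creates no new out-of-sample failures, never increases the
  error and divides it by a fixed factor infinitely often at \<open>P1\<close>. If it is too high, lower it
  smoothly towards \<open>c + r\<^sub>T\<close> with \<open>r\<^sub>T\<close> of order \<open>sqrt (a\<^sub>T / T) \<longrightarrow> 0\<close>; by a Chernoff bound
  the new failures, where the empirical cost underestimates \<open>c\<close> by more than \<open>r\<^sub>T\<close>, have
  probability at most \<open>exp (- 2 a\<^sub>T)\<close> and do not affect the rate \<open>a\<^sub>T\<close>.\<close>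

section \<open>Concentration of the empirical cost\<close>

lemma exp_le_quadratic:
  fixes x :: real
  assumes "\<bar>x\<bar> \<le> 1"
  shows "exp x \<le> 1 + x + x\<^sup>2"
proof (cases "x \<ge> 0")
  case True
  then show ?thesis using exp_bound[of x] assms by auto
next
  case False
  define y where "y = - x"
  have y: "0 \<le> y" "y \<le> 1" using False assms by (auto simp: y_def)
  have lower: "1 + y + y\<^sup>2 / 2 \<le> exp y" using exp_lower_Taylor_quadratic[OF y(1)] .
  have pos: "0 < 1 + y + y\<^sup>2 / 2" using y by (simp add: add_pos_nonneg)
  have "(1 + y + y\<^sup>2 / 2) * (1 - y + y\<^sup>2) = 1 + y\<^sup>2 / 2 + y ^ 3 / 2 + y ^ 4 / 2"
    by (simp add: field_simps power2_eq_square power3_eq_cube power4_eq_xxxx)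
  also have "\<dots> \<ge> 1" using y by simp
  finally have "1 / (1 + y + y\<^sup>2 / 2) \<le> 1 - y + y\<^sup>2"
    using pos by (simp add: divide_le_eq mult.commute)
  moreover have "1 / exp y \<le> 1 / (1 + y + y\<^sup>2 / 2)"
    using lower pos by (intro divide_left_mono) auto
  ultimately show ?thesis by (simp add: y_def exp_minus inverse_eq_divide)
qed

lemma moment_generating_le_exp:
  fixes P :: "real ^ 'd::finite" and w :: "'d \<Rightarrow> real"
  assumes P: "P \<in> prob_simplex" and mean: "(\<Sum>i\<in>UNIV. P $ i * w i) = 0"
    and wR: "\<And>i. \<bar>w i\<bar> \<le> R" and lam: "0 \<le> lam" "lam * R \<le> 1"
  shows "(\<Sum>i\<in>UNIV. P $ i * exp (lam * w i)) \<le> exp (lam\<^sup>2 * R\<^sup>2)"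
proof -
  have Pnn: "\<And>i. 0 \<le> P $ i" and Psum: "(\<Sum>i\<in>UNIV. P $ i) = 1"
    using P by (auto simp: prob_simplex_def)
  have "(\<Sum>i\<in>UNIV. P $ i * exp (lam * w i)) \<le> (\<Sum>i\<in>UNIV. P $ i * (1 + lam * w i + lam\<^sup>2 * R\<^sup>2))"
  proof (rule sum_mono)
    fix i
    have "\<bar>lam * w i\<bar> \<le> lam * R" using wR[of i] lam by (simp add: abs_mult mult_left_mono)
    then have "exp (lam * w i) \<le> 1 + lam * w i + (lam * w i)\<^sup>2"
      using lam by (intro exp_le_quadratic) linarith
    moreover have "(lam * w i)\<^sup>2 \<le> lam\<^sup>2 * R\<^sup>2"
      using wR[of i] by (simp add: power_mult_distrib mult_left_mono abs_le_square_iff power_mono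
          flip: abs_le_square_iff)
    ultimately show "P $ i * exp (lam * w i) \<le> P $ i * (1 + lam * w i + lam\<^sup>2 * R\<^sup>2)"
      using Pnn[of i] by (intro mult_left_mono) auto
  qed
  also have "\<dots> = (\<Sum>i\<in>UNIV. P $ i) + lam * (\<Sum>i\<in>UNIV. P $ i * w i) + lam\<^sup>2 * R\<^sup>2 * (\<Sum>i\<in>UNIV. P $ i)"
    by (simp add: algebra_simps sum.distrib sum_distrib_left sum_distrib_right)
  also have "\<dots> = 1 + lam\<^sup>2 * R\<^sup>2" using Psum mean by simp
  also have "\<dots> \<le> exp (lam\<^sup>2 * R\<^sup>2)" by (rule exp_ge_add_one_self)
  finally show ?thesis .
qed

lemma prob_iid_sum_gt_le_exp:
  fixes P :: "real ^ 'd::finite" and w :: "'d \<Rightarrow> real"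
  assumes P: "P \<in> prob_simplex" and mean: "(\<Sum>i\<in>UNIV. P $ i * w i) = 0"
    and wR: "\<And>i. \<bar>w i\<bar> \<le> R" and lam: "0 \<le> lam" "lam * R \<le> 1"
  shows "prob_iid P T (\<lambda>\<omega>. (\<Sum>t<T. w (\<omega> t)) > \<rho>) \<le> exp (- lam * \<rho> + real T * (lam\<^sup>2 * R\<^sup>2))"
proof -
  have Pnn: "\<And>i. 0 \<le> P $ i" using P by (auto simp: prob_simplex_def)
  define A where "A = PiE {..<T} (\<lambda>_. UNIV :: 'd set)"
  have finA: "finite A" unfolding A_def by (intro finite_PiE) auto
  define g where "g \<omega> = (\<Prod>t<T. P $ (\<omega> t)) * exp (lam * ((\<Sum>t<T. w (\<omega> t)) - \<rho>))" for \<omega>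
  have mgf: "(\<Sum>i\<in>UNIV. P $ i * exp (lam * w i)) \<le> exp (lam\<^sup>2 * R\<^sup>2)"
    by (rule moment_generating_le_exp[OF P mean wR lam])
  have "prob_iid P T (\<lambda>\<omega>. (\<Sum>t<T. w (\<omega> t)) > \<rho>)
          = (\<Sum>\<omega>\<in>{\<omega>\<in>A. (\<Sum>t<T. w (\<omega> t)) > \<rho>}. \<Prod>t<T. P $ (\<omega> t))"
    by (simp add: prob_iid_def A_def)
  also have "\<dots> \<le> (\<Sum>\<omega>\<in>{\<omega>\<in>A. (\<Sum>t<T. w (\<omega> t)) > \<rho>}. g \<omega>)"
  proof (rule sum_mono)
    fix \<omega> assume "\<omega> \<in> {\<omega>\<in>A. (\<Sum>t<T. w (\<omega> t)) > \<rho>}"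
    then have "1 \<le> exp (lam * ((\<Sum>t<T. w (\<omega> t)) - \<rho>))" using lam by auto
    then show "(\<Prod>t<T. P $ (\<omega> t)) \<le> g \<omega>"
      unfolding g_def using mult_left_mono[of 1 _ "\<Prod>t<T. P $ (\<omega> t)"] Pnn
      by (simp add: prod_nonneg)
  qed
  also have "\<dots> \<le> (\<Sum>\<omega>\<in>A. g \<omega>)"
    by (rule sum_mono2[OF finA]) (auto simp: g_def Pnn prod_nonneg)
  also have "\<dots> = exp (- lam * \<rho>) * (\<Sum>\<omega>\<in>A. \<Prod>t<T. P $ (\<omega> t) * exp (lam * w (\<omega> t)))"
  proof -
    have "g \<omega> = exp (- lam * \<rho>) * (\<Prod>t<T. P $ (\<omega> t) * exp (lam * w (\<omega> t)))" for \<omega>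
    proof -
      have "exp (lam * ((\<Sum>t<T. w (\<omega> t)) - \<rho>)) = exp (- lam * \<rho>) * exp (\<Sum>t<T. lam * w (\<omega> t))"
        by (simp add: sum_distrib_left algebra_simps flip: exp_add)
      then show ?thesis by (simp add: g_def exp_sum prod.distrib)
    qed
    then show ?thesis by (simp add: sum_distrib_left)
  qed
  also have "(\<Sum>\<omega>\<in>A. \<Prod>t<T. P $ (\<omega> t) * exp (lam * w (\<omega> t)))
               = (\<Sum>i\<in>UNIV. P $ i * exp (lam * w i)) ^ T"
    unfolding A_def by (subst prod_sum_PiE[symmetric]) auto
  also have "\<dots> \<le> exp (lam\<^sup>2 * R\<^sup>2) ^ T"
    using mgf Pnn by (intro power_mono) (auto simp: sum_nonneg)
  also have "exp (lam\<^sup>2 * R\<^sup>2) ^ T = exp (real T * (lam\<^sup>2 * R\<^sup>2))" by (simp add: exp_of_nat_mult)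
  finally show ?thesis by (simp add: exp_add[symmetric] algebra_simps mult_left_mono)
qed

lemma prob_iid_mono_disj:
  assumes P: "P \<in> prob_simplex" and cover: "\<And>\<omega>. E \<omega> \<Longrightarrow> E1 \<omega> \<or> E2 \<omega>"
  shows "prob_iid P T E \<le> prob_iid P T E1 + prob_iid P T E2"
proof -
  have Pnn: "\<And>i. 0 \<le> P $ i" using P by (auto simp: prob_simplex_def)
  define A where "A = PiE {..<T} (\<lambda>_. UNIV :: 'a set)"
  have finA: "finite A" unfolding A_def by (intro finite_PiE) auto
  define f where "f \<omega> = (\<Prod>t<T. P $ (\<omega> t))" for \<omega>
  have fnn: "\<And>\<omega>. 0 \<le> f \<omega>" unfolding f_def using Pnn by (simp add: prod_nonneg)
  have "prob_iid P T E = sum f {\<omega>\<in>A. E \<omega>}" by (simp add: prob_iid_def A_def f_def)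
  also have "\<dots> \<le> sum f ({\<omega>\<in>A. E1 \<omega>} \<union> {\<omega>\<in>A. E2 \<omega>})"
    by (rule sum_mono2) (use finA fnn cover in auto)
  also have "\<dots> \<le> sum f {\<omega>\<in>A. E1 \<omega>} + sum f {\<omega>\<in>A. E2 \<omega>}"
    using sum_Un[of "{\<omega>\<in>A. E1 \<omega>}" "{\<omega>\<in>A. E2 \<omega>}" f] finA fnn
      sum_nonneg[of "{\<omega>\<in>A. E1 \<omega>} \<inter> {\<omega>\<in>A. E2 \<omega>}" f] by auto
  also have "\<dots> = prob_iid P T E1 + prob_iid P T E2" by (simp add: prob_iid_def A_def f_def)
  finally show ?thesis .
qed

lemma prob_iid_False [simp]: "prob_iid P T (\<lambda>_. False) = 0"
  by (simp add: prob_iid_def)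

lemma cost_empirical:
  assumes "T > 0"
  shows "cost l x (empirical \<omega> T) = (\<Sum>t<T. l x (\<omega> t)) / real T"
proof -
  have "(\<Sum>t<T. l x (\<omega> t)) = (\<Sum>t<T. \<Sum>i\<in>UNIV. if \<omega> t = i then l x i else 0)"
    by simp
  also have "\<dots> = (\<Sum>i\<in>UNIV. \<Sum>t<T. if \<omega> t = i then l x i else 0)" by (rule sum.swap)
  also have "\<dots> = (\<Sum>i\<in>UNIV. l x i * real (card {t\<in>{..<T}. \<omega> t = i}))"
    by (simp add: mult.commute flip: sum.inter_filter)
  finally show ?thesis
    by (simp add: cost_def empirical_def sum_divide_distrib)
qed

lemma abs_cost_le:
  assumes "p \<in> prob_simplex" "\<And>i. \<bar>l x i\<bar> \<le> B"
  shows "\<bar>cost l x p\<bar> \<le> B"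
proof -
  have pn: "\<And>i. 0 \<le> p $ i" and ps: "(\<Sum>i\<in>UNIV. p $ i) = 1"
    using assms(1) by (auto simp: prob_simplex_def)
  have "\<bar>cost l x p\<bar> \<le> (\<Sum>i\<in>UNIV. \<bar>l x i * p $ i\<bar>)" unfolding cost_def by (rule sum_abs)
  also have "\<dots> \<le> (\<Sum>i\<in>UNIV. B * p $ i)"
    using assms(2) pn by (intro sum_mono) (simp add: abs_mult mult_right_mono)
  also have "\<dots> = B" using ps by (simp flip: sum_distrib_left)
  finally show ?thesis .
qed

lemma sum_centered_loss_eq_0:
  assumes "P \<in> prob_simplex"
  shows "(\<Sum>i\<in>UNIV. P $ i * (cost l x P - l x i)) = 0"
proof -
  have "(\<Sum>i\<in>UNIV. P $ i * (cost l x P - l x i))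
          = cost l x P * (\<Sum>i\<in>UNIV. P $ i) - (\<Sum>i\<in>UNIV. l x i * P $ i)"
    by (simp add: algebra_simps sum_subtractf sum_distrib_left)
  then show ?thesis using assms by (simp add: prob_simplex_def cost_def)
qed

lemma cost_gt_empirical_iff_sum:
  assumes "T > 0"
  shows "c > cost l x (empirical \<omega> T) + r \<longleftrightarrow> (\<Sum>t<T. c - l x (\<omega> t)) > real T * r"
proof -
  have "(\<Sum>t<T. c - l x (\<omega> t)) = real T * c - real T * cost l x (empirical \<omega> T)"
    using assms by (simp add: sum_subtractf cost_empirical)
  moreover have "c > cost l x (empirical \<omega> T) + r \<longleftrightarrow> real T * (cost l x (empirical \<omega> T) + r) < real T * c"
    using assms by simp
  ultimately show ?thesis by (simp add: algebra_simps) linarith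
qed

lemma prob_iid_cost_deviation_le:
  fixes l :: "'x \<Rightarrow> 'd::finite \<Rightarrow> real"
  assumes P: "P \<in> prob_simplex" and lB: "\<And>i. \<bar>l x i\<bar> \<le> B" and B: "B > 0"
    and T: "T > 0" and a: "a \<ge> 0" "a / real T \<le> 1/2"
  shows "prob_iid P T (\<lambda>\<omega>. cost l x P > cost l x (empirical \<omega> T) + 2 * B * sqrt (8 * (a / real T)))
          \<le> exp (- 2 * a)"
proof -
  define c where "c = cost l x P"
  define R where "R = 2 * B"
  define r where "r = R * sqrt (8 * (a / real T))"
  define w where "w i = c - l x i" for i
  \<comment> \<open>Chernoff's bound with this \<open>lam\<close> has exponent \<open>- T r\<^sup>2 / (4 R\<^sup>2) = - 2 a\<close>.\<close>
  define lam where "lam = r / (2 * R\<^sup>2)"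
  have R: "R > 0" using B by (simp add: R_def)
  have Tp: "real T > 0" using T by simp
  have "\<bar>c\<bar> \<le> B" unfolding c_def by (rule abs_cost_le[of P l x B, OF P lB])
  then have wR: "\<bar>w i\<bar> \<le> R" for i using lB[of i] by (simp add: w_def R_def abs_le_iff)
  have mean: "(\<Sum>i\<in>UNIV. P $ i * w i) = 0"
    unfolding w_def c_def by (rule sum_centered_loss_eq_0[OF P])
  have r0: "r \<ge> 0" using R a Tp by (simp add: r_def)
  have r2: "r\<^sup>2 = R\<^sup>2 * (8 * (a / real T))"
    using a Tp by (simp add: r_def power_mult_distrib)
  have lam0: "0 \<le> lam" using r0 R by (simp add: lam_def)
  have lamR: "lam * R \<le> 1"
  proof -
    have "sqrt (8 * (a / real T)) \<le> sqrt 4" using a by (intro real_sqrt_le_mono) linarith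
    then have "r \<le> 2 * R" using R by (simp add: r_def mult.commute mult_left_mono)
    then show ?thesis using R by (simp add: lam_def power2_eq_square field_simps)
  qed
  have "prob_iid P T (\<lambda>\<omega>. c > cost l x (empirical \<omega> T) + r)
        = prob_iid P T (\<lambda>\<omega>. (\<Sum>t<T. w (\<omega> t)) > real T * r)"
    unfolding w_def by (simp only: cost_gt_empirical_iff_sum[OF T])
  also have "\<dots> \<le> exp (- lam * (real T * r) + real T * (lam\<^sup>2 * R\<^sup>2))"
    by (rule prob_iid_sum_gt_le_exp[OF P mean wR lam0 lamR])
  also have "- lam * (real T * r) + real T * (lam\<^sup>2 * R\<^sup>2) = - real T * r\<^sup>2 / (4 * R\<^sup>2)"
    using R by (simp add: lam_def power2_eq_square field_simps)
  also have "\<dots> = - 2 * a" using r2 R Tp by (simp add: field_simps)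
  finally show ?thesis by (simp add: c_def r_def R_def)
qed

lemma eventually_prob_iid_cost_deviation_le:
  fixes l :: "'x \<Rightarrow> 'd::finite \<Rightarrow> real"
  assumes P: "P \<in> prob_simplex" and lB: "\<And>i. \<bar>l x i\<bar> \<le> B" and B: "B > 0"
    and a_pos: "\<And>T. a T > 0" and a_subexp: "(\<lambda>T. a T / real T) \<longlonglongrightarrow> 0"
  shows "eventually (\<lambda>T. prob_iid P T (\<lambda>\<omega>. cost l x P > cost l x (empirical \<omega> T)
                          + 2 * B * sqrt (8 * (a T / real T))) \<le> exp (- 2 * a T)) sequentially"
proof -
  have "eventually (\<lambda>T. a T / real T < 1/2) sequentially"
    using order_tendstoD(2)[OF a_subexp, of "1/2"] by simp
  then show ?thesis
    using eventually_gt_at_top[of 0]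
  proof eventually_elim
    case (elim T)
    then show ?case
      using prob_iid_cost_deviation_le[of P l x B T "a T", OF P lB B] a_pos[of T] by simp
  qed
qed

section \<open>Exponential rates\<close>

lemma elog_div_less_iff:
  assumes "a > 0"
  shows "elog p / ereal a < ereal m \<longleftrightarrow> p < exp (m * a)"
proof (cases "p \<le> 0")
  case True
  then show ?thesis using assms by (simp add: elog_def order.strict_trans1)
next
  case False
  then have "elog p / ereal a = ereal (ln p / a)" using assms by (simp add: elog_def ereal_divide)
  also have "\<dots> < ereal m \<longleftrightarrow> ln p < m * a" using assms by (simp add: divide_less_eq)
  also have "\<dots> \<longleftrightarrow> p < exp (m * a)" using False by (metis exp_less_cancel_iff exp_ln not_le)
  finally show ?thesis .
qed

lemma limsup_elog_div_le_neg1_iff: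
  assumes a_pos: "\<And>T. a T > 0"
  shows "limsup (\<lambda>T. elog (p T) / ereal (a T)) \<le> -1
           \<longleftrightarrow> (\<forall>m > -1. eventually (\<lambda>T. p T < exp (m * a T)) sequentially)"
proof -
  have "limsup (\<lambda>T. elog (p T) / ereal (a T)) \<le> -1
          \<longleftrightarrow> (\<forall>y > -1. eventually (\<lambda>T. elog (p T) / ereal (a T) < y) sequentially)"
    by (rule Limsup_le_iff)
  also have "\<dots> \<longleftrightarrow> (\<forall>m > -1. eventually (\<lambda>T. elog (p T) / ereal (a T) < ereal m) sequentially)"
  proof (intro iffI allI impI)
    fix y :: ereal assume m: "\<forall>m > -1. eventually (\<lambda>T. elog (p T) / ereal (a T) < ereal m) sequentially"
      and y: "y > -1"
    show "eventually (\<lambda>T. elog (p T) / ereal (a T) < y) sequentially"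
    proof (cases y)
      case PInf
      have "elog (p T) / ereal (a T) < \<infinity>" for T
        using a_pos[of T] by (simp add: elog_def ereal_divide)
      then show ?thesis by (simp add: PInf)
    qed (use m y in \<open>auto simp: one_ereal_def\<close>)
  qed (simp add: ereal_uminus_less_reorder)
  also have "\<dots> \<longleftrightarrow> (\<forall>m > -1. eventually (\<lambda>T. p T < exp (m * a T)) sequentially)"
    by (simp add: elog_div_less_iff[OF a_pos])
  finally show ?thesis .
qed

lemma limsup_elog_div_le_neg1_of_le_add:
  fixes q p1 p2 a :: "nat \<Rightarrow> real"
  assumes a_pos: "\<And>T. a T > 0" and a_inf: "filterlim a at_top sequentially"
    and p1: "limsup (\<lambda>T. elog (p1 T) / ereal (a T)) \<le> -1"
    and p2: "eventually (\<lambda>T. p2 T \<le> exp (- 2 * a T)) sequentially"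
    and q: "\<And>T. q T \<le> p1 T + p2 T"
  shows "limsup (\<lambda>T. elog (q T) / ereal (a T)) \<le> -1"
  unfolding limsup_elog_div_le_neg1_iff[OF a_pos]
proof (intro allI impI)
  fix m :: real assume m: "m > -1"
  define m' where "m' = (m - 1) / 2"
  have m': "-1 < m'" "m' < m" using m by (auto simp: m'_def)
  have "eventually (\<lambda>T. p1 T < exp (m' * a T)) sequentially"
    using p1 m'(1) unfolding limsup_elog_div_le_neg1_iff[OF a_pos] by blast
  moreover have "eventually (\<lambda>T. a T \<ge> ln 2 / (m - m')) sequentially"
    using a_inf filterlim_at_top by blast
  ultimately show "eventually (\<lambda>T. q T < exp (m * a T)) sequentially"
    using p2
  proof eventually_elim
    case (elim T)
    have "exp (- 2 * a T) \<le> exp (m' * a T)"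
      using mult_right_mono[of "- 2" m' "a T"] m'(1) a_pos[of T] by simp
    then have "p2 T \<le> exp (m' * a T)" using elim(3) by linarith
    moreover have "ln 2 \<le> (m - m') * a T"
      using elim(2) m' by (simp add: pos_divide_le_eq mult.commute)
    then have "exp (ln 2 + m' * a T) \<le> exp (m * a T)" by (simp add: left_diff_distrib)
    then have "2 * exp (m' * a T) \<le> exp (m * a T)" by (simp add: exp_add)
    ultimately show ?case using elim(1) q[of T] by linarith
  qed
qed

section \<open>Closure properties of regular predictors\<close>

lemma unif_bounded_add:
  fixes F G :: "nat \<Rightarrow> 'a \<Rightarrow> 'b::real_normed_vector"
  assumes "unif_bounded S F" "unif_bounded S G"
  shows "unif_bounded S (\<lambda>T y. F T y + G T y)"
proof -
  obtain BF BG where "\<forall>T. \<forall>y\<in>S. norm (F T y) \<le> BF" "\<forall>T. \<forall>y\<in>S. norm (G T y) \<le> BG"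
    using assms unfolding unif_bounded_def by blast
  then show ?thesis unfolding unif_bounded_def
    by (intro exI[of _ "BF + BG"]) (meson add_mono norm_triangle_ineq order_trans)
qed

lemma unif_bounded_uminus:
  fixes F :: "nat \<Rightarrow> 'a \<Rightarrow> 'b::real_normed_vector"
  shows "unif_bounded S F \<Longrightarrow> unif_bounded S (\<lambda>T y. - F T y)"
  unfolding unif_bounded_def by simp

lemma equicont_add:
  fixes F G :: "nat \<Rightarrow> 'a::topological_space \<Rightarrow> 'b::real_normed_vector"
  assumes "equicont S F" "equicont S G"
  shows "equicont S (\<lambda>T y. F T y + G T y)"
  unfolding equicont_def
proof (intro ballI allI impI)
  fix y e assume y: "y \<in> S" and e: "(e::real) > 0"
  obtain U1 where U1: "open U1" "y \<in> U1" "\<forall>T. \<forall>z\<in>U1 \<inter> S. dist (F T y) (F T z) < e/2"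
    using assms(1) y e unfolding equicont_def by (meson half_gt_zero)
  obtain U2 where U2: "open U2" "y \<in> U2" "\<forall>T. \<forall>z\<in>U2 \<inter> S. dist (G T y) (G T z) < e/2"
    using assms(2) y e unfolding equicont_def by (meson half_gt_zero)
  show "\<exists>U. open U \<and> y \<in> U \<and> (\<forall>T. \<forall>z\<in>U \<inter> S. dist (F T y + G T y) (F T z + G T z) < e)"
  proof (intro exI conjI allI ballI)
    show "open (U1 \<inter> U2)" "y \<in> U1 \<inter> U2" using U1 U2 by auto
    fix T z assume "z \<in> U1 \<inter> U2 \<inter> S"
    then have "dist (F T y) (F T z) < e/2" "dist (G T y) (G T z) < e/2" using U1 U2 by auto
    then show "dist (F T y + G T y) (F T z + G T z) < e"
      using dist_triangle_add[of "F T y" "G T y" "F T z" "G T z"] by linarith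
  qed
qed

lemma equicont_uminus:
  fixes F :: "nat \<Rightarrow> 'a::topological_space \<Rightarrow> 'b::real_normed_vector"
  shows "equicont S F \<Longrightarrow> equicont S (\<lambda>T y. - F T y)"
  unfolding equicont_def by (simp add: dist_minus)

lemma equicont_compose_lipschitz:
  fixes F :: "nat \<Rightarrow> 'a::topological_space \<Rightarrow> 'b::metric_space" and \<phi> :: "'b \<Rightarrow> 'c::metric_space"
  assumes "equicont S F" and L: "L \<ge> 0" and lip: "\<And>a b. dist (\<phi> a) (\<phi> b) \<le> L * dist a b"
  shows "equicont S (\<lambda>T y. \<phi> (F T y))"
  unfolding equicont_def
proof (intro ballI allI impI)
  fix y e assume y: "y \<in> S" and e: "(e::real) > 0"
  have e': "e / (L + 1) > 0" using e L by auto
  obtain U where U: "open U" "y \<in> U" "\<forall>T. \<forall>z\<in>U \<inter> S. dist (F T y) (F T z) < e / (L + 1)"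
    using assms(1) y e' unfolding equicont_def by meson
  show "\<exists>U. open U \<and> y \<in> U \<and> (\<forall>T. \<forall>z\<in>U \<inter> S. dist (\<phi> (F T y)) (\<phi> (F T z)) < e)"
  proof (intro exI conjI allI ballI)
    show "open U" "y \<in> U" using U by auto
    fix T z assume z: "z \<in> U \<inter> S"
    have "dist (\<phi> (F T y)) (\<phi> (F T z)) \<le> L * dist (F T y) (F T z)" by (rule lip)
    also have "\<dots> \<le> L * (e / (L + 1))" using U(3) z L by (intro mult_left_mono) (auto intro: less_imp_le)
    also have "\<dots> < e" using e L by (simp add: field_simps)
    finally show "dist (\<phi> (F T y)) (\<phi> (F T z)) < e" .
  qed
qed

lemma equicont_continuous_on:
  fixes g :: "'a::metric_space \<Rightarrow> 'b::metric_space"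
  assumes "continuous_on S g"
  shows "equicont S (\<lambda>T y. g y)"
  unfolding equicont_def
proof (intro ballI allI impI)
  fix y e assume y: "y \<in> S" and e: "(e::real) > 0"
  obtain d where d: "d > 0" "\<forall>x'\<in>S. dist x' y < d \<longrightarrow> dist (g x') (g y) < e"
    using assms y e unfolding continuous_on_iff by meson
  show "\<exists>U. open U \<and> y \<in> U \<and> (\<forall>T. \<forall>z\<in>U \<inter> S. dist (g y) (g z) < e)"
    by (rule exI[of _ "ball y d"]) (use d in \<open>auto simp: dist_commute\<close>)
qed

lemma equicont_const: "equicont S (\<lambda>T y. s T)"
  unfolding equicont_def by (intro ballI allI impI exI[of _ UNIV]) auto

lemma equicont_scaleR:
  fixes F :: "nat \<Rightarrow> 'a::topological_space \<Rightarrow> real" and G :: "nat \<Rightarrow> 'a \<Rightarrow> 'b::real_normed_vector"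
  assumes "equicont S F" "equicont S G"
    and BF: "\<And>T y. y \<in> S \<Longrightarrow> \<bar>F T y\<bar> \<le> BF" and "unif_bounded S G"
  shows "equicont S (\<lambda>T y. F T y *\<^sub>R G T y)"
  unfolding equicont_def
proof (intro ballI allI impI)
  obtain BG where BG: "\<And>T y. y \<in> S \<Longrightarrow> norm (G T y) \<le> BG"
    using \<open>unif_bounded S G\<close> unfolding unif_bounded_def by blast
  fix y e assume y: "y \<in> S" and e: "(e::real) > 0"
  have BF0: "BF \<ge> 0" using BF[OF y, of 0] by linarith
  have BG0: "BG \<ge> 0" using BG[OF y, of 0] norm_ge_zero order_trans by blast
  define e1 where "e1 = e / (2 * (BG + 1))"
  define e2 where "e2 = e / (2 * (BF + 1))"
  have e1: "e1 > 0" and e2: "e2 > 0" using e BF0 BG0 by (auto simp: e1_def e2_def)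
  obtain U1 where U1: "open U1" "y \<in> U1" "\<forall>T. \<forall>z\<in>U1 \<inter> S. dist (F T y) (F T z) < e1"
    using assms(1) y e1 unfolding equicont_def by meson
  obtain U2 where U2: "open U2" "y \<in> U2" "\<forall>T. \<forall>z\<in>U2 \<inter> S. dist (G T y) (G T z) < e2"
    using assms(2) y e2 unfolding equicont_def by meson
  show "\<exists>U. open U \<and> y \<in> U \<and> (\<forall>T. \<forall>z\<in>U \<inter> S. dist (F T y *\<^sub>R G T y) (F T z *\<^sub>R G T z) < e)"
  proof (intro exI conjI allI ballI)
    show "open (U1 \<inter> U2)" "y \<in> U1 \<inter> U2" using U1 U2 by auto
    fix T z assume z: "z \<in> U1 \<inter> U2 \<inter> S"
    have dF: "\<bar>F T y - F T z\<bar> < e1" using U1 z by (auto simp: dist_real_def)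
    have dG: "norm (G T y - G T z) < e2" using U2 z by (auto simp: dist_norm)
    have "F T y *\<^sub>R G T y - F T z *\<^sub>R G T z = F T y *\<^sub>R (G T y - G T z) + (F T y - F T z) *\<^sub>R G T z"
      by (simp add: algebra_simps)
    then have "dist (F T y *\<^sub>R G T y) (F T z *\<^sub>R G T z)
                 \<le> \<bar>F T y\<bar> * norm (G T y - G T z) + \<bar>F T y - F T z\<bar> * norm (G T z)"
      by (metis dist_norm norm_scaleR norm_triangle_ineq)
    also have "\<dots> \<le> BF * e2 + e1 * BG"
      using BF[OF y, of T] BG[of z T] z dF dG BF0 BG0 by (intro add_mono mult_mono) auto
    also have "BF * e2 < e / 2" using e BF0 by (simp add: e2_def field_simps)
    also have "e1 * BG < e / 2" using e BG0 by (simp add: e1_def field_simps)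
    finally show "dist (F T y *\<^sub>R G T y) (F T z *\<^sub>R G T z) < e" by linarith
  qed
qed

lemma unif_bounded_scaleR:
  fixes F :: "nat \<Rightarrow> 'a \<Rightarrow> real" and G :: "nat \<Rightarrow> 'a \<Rightarrow> 'b::real_normed_vector"
  assumes BF: "\<And>T y. y \<in> S \<Longrightarrow> \<bar>F T y\<bar> \<le> BF" and "unif_bounded S G"
  shows "unif_bounded S (\<lambda>T y. F T y *\<^sub>R G T y)"
proof -
  obtain BG where BG: "\<And>T y. y \<in> S \<Longrightarrow> norm (G T y) \<le> BG"
    using \<open>unif_bounded S G\<close> unfolding unif_bounded_def by blast
  have "norm (F T y *\<^sub>R G T y) \<le> BF * BG" if "y \<in> S" for T y
    using BF[OF that, of T] BG[OF that, of T] by (simp add: mult_mono')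
  then show ?thesis unfolding unif_bounded_def by blast
qed

definition regular_with_deriv ::
  "'x::euclidean_space set \<Rightarrow> ('x \<Rightarrow> real ^ 'd::finite \<Rightarrow> nat \<Rightarrow> real) \<Rightarrow>
     ('x \<Rightarrow> real ^ 'd \<Rightarrow> nat \<Rightarrow> real ^ 'd) \<Rightarrow> bool" where
  "regular_with_deriv X f D \<longleftrightarrow>
     (\<forall>T. \<forall>x\<in>X. \<forall>p\<in>prob_simplex.
        ((\<lambda>q. f x q T) has_derivative (\<lambda>h. D x p T \<bullet> h)) (at p within prob_simplex)) \<and>
     unif_bounded (X \<times> prob_simplex) (\<lambda>T (x, p). f x p T) \<and>
     equicont (X \<times> prob_simplex) (\<lambda>T (x, p). f x p T) \<and>
     unif_bounded (X \<times> prob_simplex) (\<lambda>T (x, p). D x p T) \<and>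
     equicont (X \<times> prob_simplex) (\<lambda>T (x, p). D x p T)"

lemma regular_iff_with_deriv: "regular X f \<longleftrightarrow> (\<exists>D. regular_with_deriv X f D)"
  unfolding regular_def regular_with_deriv_def by blast

lemma regular_with_deriv_add:
  assumes "regular_with_deriv X f Df" "regular_with_deriv X g Dg"
  shows "regular_with_deriv X (\<lambda>x p T. f x p T + g x p T) (\<lambda>x p T. Df x p T + Dg x p T)"
proof -
  have "((\<lambda>q. f x q T + g x q T) has_derivative (\<lambda>h. (Df x p T + Dg x p T) \<bullet> h))
          (at p within prob_simplex)" if "x \<in> X" "p \<in> prob_simplex" for T x p
    using has_derivative_add[of "\<lambda>q. f x q T" "\<lambda>h. Df x p T \<bullet> h" _ "\<lambda>q. g x q T" "\<lambda>h. Dg x p T \<bullet> h"]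
      assms that by (simp add: regular_with_deriv_def inner_add_left)
  then show ?thesis
    using assms unfolding regular_with_deriv_def
    by (auto simp: split_beta' dest: unif_bounded_add equicont_add)
qed

lemma regular_add:
  "regular X f \<Longrightarrow> regular X g \<Longrightarrow> regular X (\<lambda>x p T. f x p T + g x p T)"
  unfolding regular_iff_with_deriv by (blast intro: regular_with_deriv_add)

lemma regular_uminus:
  assumes "regular X f"
  shows "regular X (\<lambda>x p T. - f x p T)"
proof -
  obtain D where D: "regular_with_deriv X f D" using assms regular_iff_with_deriv by blast
  have "((\<lambda>q. - f x q T) has_derivative (\<lambda>h. (- D x p T) \<bullet> h)) (at p within prob_simplex)"
    if "x \<in> X" "p \<in> prob_simplex" for T x p
    using has_derivative_minus[of "\<lambda>q. f x q T" "\<lambda>h. D x p T \<bullet> h"] D that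
    by (simp add: regular_with_deriv_def)
  then have "regular_with_deriv X (\<lambda>x p T. - f x p T) (\<lambda>x p T. - D x p T)"
    using D unfolding regular_with_deriv_def
    by (auto simp: split_beta' simp del: inner_minus_left dest: unif_bounded_uminus equicont_uminus)
  then show ?thesis unfolding regular_iff_with_deriv by blast
qed

lemma regular_diff:
  "regular X f \<Longrightarrow> regular X g \<Longrightarrow> regular X (\<lambda>x p T. f x p T - g x p T)"
  using regular_add[of X f "\<lambda>x p T. - g x p T"] regular_uminus[of X g] by simp

lemma regular_compose:
  fixes f :: "'x::euclidean_space \<Rightarrow> real ^ 'd::finite \<Rightarrow> nat \<Rightarrow> real" and \<psi> \<psi>' :: "real \<Rightarrow> real"
  assumes "regular X f"
    and deriv: "\<And>s. (\<psi> has_real_derivative \<psi>' s) (at s)"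
    and bound: "\<And>s. \<bar>\<psi> s\<bar> \<le> \<bar>s\<bar>"
    and lipschitz: "\<And>s t. \<bar>\<psi> s - \<psi> t\<bar> \<le> \<bar>s - t\<bar>"
    and deriv_bound: "\<And>s. \<bar>\<psi>' s\<bar> \<le> 1"
    and deriv_lipschitz: "\<And>s t. \<bar>\<psi>' s - \<psi>' t\<bar> \<le> L * \<bar>s - t\<bar>" and L: "L \<ge> 0"
  shows "regular X (\<lambda>x p T. \<psi> (f x p T))"
proof -
  define S where "S = X \<times> (prob_simplex :: (real ^ 'd) set)"
  define F where "F = (\<lambda>T (x, p). f x p T)"
  obtain D where D: "regular_with_deriv X f D" using assms(1) regular_iff_with_deriv by blast
  define DD where "DD = (\<lambda>T (x, p). D x p T)"
  have F: "unif_bounded S F" "equicont S F" and DD: "unif_bounded S DD" "equicont S DD"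
    using D by (simp_all add: regular_with_deriv_def S_def F_def DD_def)
  have "((\<lambda>q. \<psi> (f x q T)) has_derivative (\<lambda>h. (\<psi>' (f x p T) *\<^sub>R D x p T) \<bullet> h))
          (at p within prob_simplex)" if "x \<in> X" "p \<in> prob_simplex" for T x p
  proof -
    have "((\<lambda>q. f x q T) has_derivative (\<lambda>h. D x p T \<bullet> h)) (at p within prob_simplex)"
      using D that by (simp add: regular_with_deriv_def)
    from has_derivative_compose[OF this has_field_derivative_imp_has_derivative[OF deriv]]
    show ?thesis by (simp add: inner_scaleR_left)
  qed
  moreover have "unif_bounded S (\<lambda>T y. \<psi> (F T y))"
    using F(1) bound unfolding unif_bounded_def by (metis order_trans real_norm_def)
  moreover have "equicont S (\<lambda>T y. \<psi> (F T y))"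
    by (rule equicont_compose_lipschitz[OF F(2), of 1]) (auto simp: dist_real_def lipschitz)
  moreover have "unif_bounded S (\<lambda>T y. \<psi>' (F T y) *\<^sub>R DD T y)"
    by (rule unif_bounded_scaleR[OF deriv_bound DD(1)])
  moreover have "equicont S (\<lambda>T y. \<psi>' (F T y) *\<^sub>R DD T y)"
    by (rule equicont_scaleR[OF equicont_compose_lipschitz[OF F(2) L] DD(2) deriv_bound DD(1)])
      (simp add: dist_real_def deriv_lipschitz)
  ultimately have "regular_with_deriv X (\<lambda>x p T. \<psi> (f x p T)) (\<lambda>x p T. \<psi>' (f x p T) *\<^sub>R D x p T)"
    unfolding regular_with_deriv_def S_def F_def DD_def
    by (simp add: split_beta' del: inner_scaleR_left)
  then show ?thesis unfolding regular_iff_with_deriv by blast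
qed

lemma cost_eq_inner: "cost l x q = (\<chi> i. l x i) \<bullet> q"
  by (simp add: cost_def inner_vec_def)

lemma continuous_on_loss_vec:
  fixes l :: "'x::topological_space \<Rightarrow> 'd::finite \<Rightarrow> real"
  assumes "\<And>i. continuous_on X (\<lambda>x. l x i)"
  shows "continuous_on (X \<times> P) (\<lambda>(x, p). \<chi> i. l x i)"
proof -
  have "continuous_on (X \<times> P) (\<lambda>y. l (fst y) i)" for i
    by (rule continuous_on_compose2[OF assms continuous_on_fst]) (auto intro: continuous_on_id)
  then show ?thesis by (simp add: split_beta' continuous_on_vec_lambda)
qed

lemma continuous_on_cost:
  fixes l :: "'x::topological_space \<Rightarrow> 'd::finite \<Rightarrow> real"
  assumes "\<And>i. continuous_on X (\<lambda>x. l x i)"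
  shows "continuous_on (X \<times> P) (\<lambda>(x, p). cost l x p)"
  unfolding cost_eq_inner split_beta'
  using continuous_on_loss_vec[OF assms, of P]
  by (intro continuous_on_inner continuous_on_snd continuous_on_id) (simp add: split_beta')

lemma regular_cost_add:
  fixes l :: "'x::euclidean_space \<Rightarrow> 'd::finite \<Rightarrow> real" and s :: "nat \<Rightarrow> real"
  assumes l_cont: "\<And>i. continuous_on X (\<lambda>x. l x i)"
    and l_bound: "\<And>x i. x \<in> X \<Longrightarrow> \<bar>l x i\<bar> \<le> B"
    and "Bseq s"
  shows "regular X (\<lambda>x p T. cost l x p + s T)"
proof -
  obtain Bs where s_bound: "\<And>T. \<bar>s T\<bar> \<le> Bs" using \<open>Bseq s\<close> unfolding Bseq_def by auto
  define S where "S = X \<times> (prob_simplex :: (real ^ 'd) set)"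
  have "unif_bounded S (\<lambda>T (x, p). cost l x p + s T)"
    unfolding unif_bounded_def
  proof (intro exI[of _ "B + Bs"] allI ballI)
    fix T y assume "y \<in> S"
    then obtain x p where y: "y = (x, p)" "x \<in> X" "p \<in> prob_simplex" by (auto simp: S_def)
    have "\<bar>cost l x p\<bar> \<le> B" by (rule abs_cost_le[of p l x B, OF y(3) l_bound[OF y(2)]])
    then show "norm ((\<lambda>T (x, p). cost l x p + s T) T y) \<le> B + Bs"
      using s_bound[of T] y(1) by (simp add: abs_le_iff)
  qed
  moreover have "equicont S (\<lambda>T (x, p). cost l x p + s T)"
    using equicont_add[OF equicont_continuous_on[OF continuous_on_cost[OF l_cont]] equicont_const]
    by (simp add: S_def split_beta')
  moreover have "unif_bounded S (\<lambda>T (x, p). \<chi> i. l x i)"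
    unfolding unif_bounded_def
  proof (intro exI[of _ "real CARD('d) * B"] allI ballI)
    fix T y assume "y \<in> S"
    then obtain x p where y: "y = (x, p)" "x \<in> X" by (auto simp: S_def)
    have "norm (\<chi> i. l x i) \<le> (\<Sum>i\<in>UNIV. \<bar>(\<chi> i. l x i) $ i\<bar>)" by (rule norm_le_l1_cart)
    also have "\<dots> \<le> (\<Sum>i\<in>(UNIV::'d set). B)" using l_bound[OF y(2)] by (intro sum_mono) simp
    finally show "norm ((\<lambda>T (x, p). \<chi> i. l x i) T y) \<le> real CARD('d) * B" using y by simp
  qed
  moreover have "equicont S (\<lambda>T (x, p). \<chi> i. l x i)"
    using equicont_continuous_on[OF continuous_on_loss_vec[OF l_cont]] by (simp add: S_def)
  moreover have "((\<lambda>q. cost l x q + s T) has_derivative (\<lambda>h. (\<chi> i. l x i) \<bullet> h)) (at p within prob_simplex)"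
    for x p T
    unfolding cost_eq_inner
    by (intro has_derivative_add_const bounded_linear_imp_has_derivative bounded_linear_inner_right)
  ultimately have "regular_with_deriv X (\<lambda>x p T. cost l x p + s T) (\<lambda>x p T. \<chi> i. l x i)"
    unfolding regular_with_deriv_def S_def by blast
  then show ?thesis unfolding regular_iff_with_deriv by blast
qed

section \<open>A smooth positive part\<close>

lemma sq_pos_part_has_real_derivative:
  "((\<lambda>s::real. (max 0 s)\<^sup>2) has_real_derivative 2 * max 0 t) (at t)"
proof (cases t "0::real" rule: linorder_cases)
  case less
  have "((\<lambda>s::real. 0) has_real_derivative 2 * max 0 t) (at t)" using less by simp
  then show ?thesis
    by (rule has_field_derivative_transform_within_open[where S="{..<0}"]) (use less in auto)
next
  case greater
  have "((\<lambda>s::real. s\<^sup>2) has_real_derivative 2 * max 0 t) (at t)"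
    using greater by (auto intro!: derivative_eq_intros)
  then show ?thesis
    by (rule has_field_derivative_transform_within_open[where S="{0<..}"]) (use greater in auto)
next
  case equal
  have "((\<lambda>y. ((max 0 y)\<^sup>2 - (max 0 0)\<^sup>2) / (y - 0)) \<longlongrightarrow> (0::real)) (at 0)"
  proof (rule Lim_null_comparison)
    show "\<forall>\<^sub>F y in at 0. norm (((max 0 y)\<^sup>2 - (max 0 0)\<^sup>2) / (y - 0)) \<le> \<bar>y\<bar>"
      by (intro always_eventually allI) (simp add: max_def power2_eq_square)
    show "((\<lambda>y. \<bar>y\<bar>) \<longlongrightarrow> (0::real)) (at 0)"
      using tendsto_rabs[OF tendsto_ident_at[of "0::real" UNIV]] by simp
  qed
  then show ?thesis using equal unfolding has_field_derivative_iff by simp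
qed

text \<open>A \<open>C\<^sup>1\<close> substitute for the positive part \<open>max 0 s\<close>, which would break the
  differentiability required of regular predictors.\<close>

definition smooth_pos :: "real \<Rightarrow> real \<Rightarrow> real" where
  "smooth_pos \<delta> s = ((max 0 s)\<^sup>2 - (max 0 (s - \<delta>))\<^sup>2) / (2 * \<delta>)"

definition smooth_pos_deriv :: "real \<Rightarrow> real \<Rightarrow> real" where
  "smooth_pos_deriv \<delta> s = (max 0 s - max 0 (s - \<delta>)) / \<delta>"

lemma smooth_pos_has_real_derivative:
  assumes "\<delta> > 0"
  shows "(smooth_pos \<delta> has_real_derivative smooth_pos_deriv \<delta> s) (at s)"
proof -
  have shifted: "((\<lambda>s. (max 0 (s - \<delta>))\<^sup>2) has_real_derivative 2 * max 0 (s - \<delta>) * 1) (at s)"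
    by (rule DERIV_chain2[OF sq_pos_part_has_real_derivative]) (auto intro!: derivative_eq_intros)
  have "((\<lambda>s. ((max 0 s)\<^sup>2 - (max 0 (s - \<delta>))\<^sup>2) / (2 * \<delta>)) has_real_derivative
          (2 * max 0 s - 2 * max 0 (s - \<delta>) * 1) / (2 * \<delta>)) (at s)"
    by (intro DERIV_cdivide DERIV_diff sq_pos_part_has_real_derivative shifted)
  moreover have "(2 * max 0 s - 2 * max 0 (s - \<delta>) * 1) / (2 * \<delta>) = smooth_pos_deriv \<delta> s"
    using assms by (simp add: smooth_pos_deriv_def field_simps)
  ultimately show ?thesis by (simp add: smooth_pos_def[abs_def])
qed

lemma smooth_pos_eq_0: "\<delta> > 0 \<Longrightarrow> s \<le> 0 \<Longrightarrow> smooth_pos \<delta> s = 0"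
  by (simp add: smooth_pos_def max_absorb1)

lemma smooth_pos_eq_shift: "\<delta> > 0 \<Longrightarrow> s \<ge> \<delta> \<Longrightarrow> smooth_pos \<delta> s = s - \<delta> / 2"
  by (simp add: smooth_pos_def max_def field_simps power2_eq_square)

lemma smooth_pos_bounds:
  assumes "\<delta> > 0"
  shows "0 \<le> smooth_pos \<delta> s" "smooth_pos \<delta> s \<le> max 0 s"
proof -
  consider "s \<le> 0" | "0 < s" "s < \<delta>" | "\<delta> \<le> s" by linarith
  then have "0 \<le> smooth_pos \<delta> s \<and> smooth_pos \<delta> s \<le> max 0 s"
  proof cases
    case 1
    then show ?thesis using assms by (simp add: smooth_pos_eq_0 max_absorb1)
  next
    case 2
    then have "smooth_pos \<delta> s = s\<^sup>2 / (2 * \<delta>)" by (simp add: smooth_pos_def max_def)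
    moreover have "s\<^sup>2 \<le> s * (2 * \<delta>)" using 2 by (simp add: power2_eq_square)
    ultimately show ?thesis using 2 assms by (simp add: divide_le_eq)
  next
    case 3
    then show ?thesis using assms by (simp add: smooth_pos_eq_shift)
  qed
  then show "0 \<le> smooth_pos \<delta> s" "smooth_pos \<delta> s \<le> max 0 s" by auto
qed

lemma abs_smooth_pos_le: "\<delta> > 0 \<Longrightarrow> \<bar>smooth_pos \<delta> s\<bar> \<le> \<bar>s\<bar>"
  using smooth_pos_bounds[of \<delta> s] by auto

lemma abs_smooth_pos_deriv_le:
  assumes "\<delta> > 0"
  shows "\<bar>smooth_pos_deriv \<delta> s\<bar> \<le> 1"
proof -
  have "0 \<le> max 0 s - max 0 (s - \<delta>)" "max 0 s - max 0 (s - \<delta>) \<le> \<delta>"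
    using assms by (simp_all add: max_def)
  then show ?thesis using assms by (simp add: smooth_pos_deriv_def abs_le_iff divide_le_eq)
qed

lemma smooth_pos_deriv_lipschitz:
  assumes "\<delta> > 0"
  shows "\<bar>smooth_pos_deriv \<delta> s - smooth_pos_deriv \<delta> t\<bar> \<le> (2 / \<delta>) * \<bar>s - t\<bar>"
proof -
  have pos_part: "\<bar>max 0 u - max 0 v\<bar> \<le> \<bar>u - v\<bar>" for u v :: real
    unfolding max_def by (auto simp: abs_if)
  have "smooth_pos_deriv \<delta> s - smooth_pos_deriv \<delta> t
          = ((max 0 s - max 0 t) - (max 0 (s - \<delta>) - max 0 (t - \<delta>))) / \<delta>"
    by (simp add: smooth_pos_deriv_def diff_divide_distrib)
  moreover have "\<bar>(max 0 s - max 0 t) - (max 0 (s - \<delta>) - max 0 (t - \<delta>))\<bar> \<le> 2 * \<bar>s - t\<bar>"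
    using pos_part[of s t] pos_part[of "s - \<delta>" "t - \<delta>"] by (simp add: abs_le_iff)
  ultimately show ?thesis
    using assms by (simp add: abs_divide divide_right_mono)
qed

lemma smooth_pos_lipschitz:
  assumes "\<delta> > 0"
  shows "\<bar>smooth_pos \<delta> s - smooth_pos \<delta> t\<bar> \<le> \<bar>s - t\<bar>"
proof -
  have "\<bar>smooth_pos \<delta> v - smooth_pos \<delta> u\<bar> \<le> \<bar>v - u\<bar>" if uv: "u < v" for u v
  proof -
    obtain z where "smooth_pos \<delta> v - smooth_pos \<delta> u = (v - u) * smooth_pos_deriv \<delta> z"
      using MVT2[OF uv, of "smooth_pos \<delta>" "smooth_pos_deriv \<delta>"]
        smooth_pos_has_real_derivative[OF assms] by blast
    then show ?thesis
      using abs_smooth_pos_deriv_le[OF assms, of z] mult_left_mono[of _ 1 "\<bar>v - u\<bar>"]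
      by (simp add: abs_mult)
  qed
  then show ?thesis
    by (cases s t rule: linorder_cases) (force simp: abs_minus_commute)+
qed

lemma regular_smooth_pos:
  assumes "regular X f" "\<delta> > 0"
  shows "regular X (\<lambda>x p T. smooth_pos \<delta> (f x p T))"
  using assms(2)
  by (intro regular_compose[OF assms(1) smooth_pos_has_real_derivative abs_smooth_pos_le
        smooth_pos_lipschitz abs_smooth_pos_deriv_le smooth_pos_deriv_lipschitz]) simp_all

lemma smooth_pos_raise_bounds:
  assumes "\<delta> > 0"
  shows "u \<le> u + smooth_pos \<delta> (t - u)" "u + smooth_pos \<delta> (t - u) \<le> max u t"
  using smooth_pos_bounds[OF assms, of "t - u"] by (auto simp: max_def split: if_splits)

lemma smooth_pos_lower_bounds:
  assumes "\<delta> > 0"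
  shows "min u t \<le> u - smooth_pos \<delta> (u - t)" "u - smooth_pos \<delta> (u - t) \<le> u"
  using smooth_pos_bounds[OF assms, of "u - t"] by (auto simp: max_def min_def split: if_splits)

section \<open>Strict improvement of a predictor\<close>

lemma err_ratio_le_1_if_between:
  assumes "min u c \<le> v" "v \<le> max u c"
  shows "err_ratio (v - c) (u - c) \<le> 1"
  using assms by (auto simp: err_ratio_def divide_le_eq abs_le_iff min_def max_def split: if_splits)

lemma err_ratio_le_if_abs_le:
  "v \<noteq> 0 \<Longrightarrow> \<bar>u\<bar> \<le> k * \<bar>v\<bar> \<Longrightarrow> err_ratio u v \<le> ereal k"
  by (auto simp: err_ratio_def divide_le_eq)

lemma not_tendsto_1_if_frequently_le:
  assumes "k < 1" and "frequently (\<lambda>T. f T \<le> ereal k) sequentially"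
  shows "\<not> (f \<longlongrightarrow> (1::ereal)) sequentially"
proof
  assume "(f \<longlongrightarrow> 1) sequentially"
  then have "eventually (\<lambda>T. f T > ereal k) sequentially"
    by (rule order_tendstoD) (use assms(1) in \<open>simp add: one_ereal_def\<close>)
  with assms(2) have "frequently (\<lambda>T. f T > ereal k \<and> f T \<le> ereal k) sequentially"
    by (rule frequently_eventually_conj)
  then have "frequently (\<lambda>T. False) sequentially"
    by (rule frequently_elim1) auto
  then show False by simp
qed

lemma pred_le_and_not_pred_equiv:
  assumes le: "\<And>x P T. err_ratio (c' x P T - cost l x P) (c x P T - cost l x P) \<le> 1"
    and x0: "x0 \<in> X" and P1: "P1 \<in> prob_simplex_int" and k: "k < 1"
    and frequently_le: "frequently (\<lambda>T. err_ratio (c' x0 P1 T - cost l x0 P1)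
                                             (c x0 P1 T - cost l x0 P1) \<le> ereal k) sequentially"
  shows "pred_le X l c' c \<and> \<not> pred_equiv X l c' c"
proof
  show "pred_le X l c' c" unfolding pred_le_def
    by (intro ballI Limsup_bounded) (simp add: le)
  show "\<not> pred_equiv X l c' c" unfolding pred_equiv_def
    using not_tendsto_1_if_frequently_le[OF k frequently_le] x0 P1 by blast
qed

lemma prob_simplex_int_subset: "prob_simplex_int \<subseteq> prob_simplex"
  by (auto simp: prob_simplex_int_def prob_simplex_def less_imp_le)

lemma oos_guarantee_if_failure_covered:
  fixes l :: "'x \<Rightarrow> 'd::finite \<Rightarrow> real" and c c' :: "'x \<Rightarrow> real ^ 'd \<Rightarrow> nat \<Rightarrow> real"
  assumes a_pos: "\<And>T. a T > 0" and a_inf: "filterlim a at_top sequentially"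
    and oos: "oos_guarantee X l a c"
    and cover: "\<And>x P T \<omega>. x \<in> X \<Longrightarrow> P \<in> prob_simplex_int \<Longrightarrow> cost l x P > c' x (empirical \<omega> T) T \<Longrightarrow>
                  cost l x P > c x (empirical \<omega> T) T \<or> E x P T \<omega>"
    and small: "\<And>x P. x \<in> X \<Longrightarrow> P \<in> prob_simplex_int \<Longrightarrow>
                  eventually (\<lambda>T. prob_iid P T (E x P T) \<le> exp (- 2 * a T)) sequentially"
  shows "oos_guarantee X l a c'"
  unfolding oos_guarantee_def
proof (intro ballI)
  fix x and P :: "real ^ 'd" assume x: "x \<in> X" and P: "P \<in> prob_simplex_int"
  show "limsup (\<lambda>T. elog (prob_iid P T (\<lambda>\<omega>. cost l x P > c' x (empirical \<omega> T) T)) / ereal (a T)) \<le> -1"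
  proof (rule limsup_elog_div_le_neg1_of_le_add[OF a_pos a_inf _ small[OF x P]])
    show "limsup (\<lambda>T. elog (prob_iid P T (\<lambda>\<omega>. cost l x P > c x (empirical \<omega> T) T)) / ereal (a T)) \<le> -1"
      using oos x P unfolding oos_guarantee_def by blast
    show "prob_iid P T (\<lambda>\<omega>. cost l x P > c' x (empirical \<omega> T) T)
            \<le> prob_iid P T (\<lambda>\<omega>. cost l x P > c x (empirical \<omega> T) T) + prob_iid P T (E x P T)" for T
      using P prob_simplex_int_subset by (intro prob_iid_mono_disj cover[OF x P]) auto
  qed
qed

lemma exists_prob_simplex_int_near:
  fixes P0 :: "real ^ 'd::finite"
  assumes P0: "P0 \<in> prob_simplex" and \<rho>: "\<rho> > 0"
  shows "\<exists>P1\<in>prob_simplex_int. norm (P1 - P0) < \<rho>"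
proof -
  define u :: "real ^ 'd" where "u = (\<chi> i. 1 / real CARD('d))"
  define t where "t = min (1/2) (\<rho> / (norm (u - P0) + 1))"
  have "0 < \<rho> / (norm (u - P0) + 1)" using \<rho> by (simp add: add_nonneg_pos)
  then have t: "0 < t" "t \<le> 1/2" unfolding t_def by (simp_all only: min_less_iff_conj) simp_all
  define P1 where "P1 = P0 + t *\<^sub>R (u - P0)"
  have Pnn: "\<And>i. 0 \<le> P0 $ i" and Psum: "(\<Sum>i\<in>UNIV. P0 $ i) = 1"
    using P0 by (auto simp: prob_simplex_def)
  have "P1 $ i = (1 - t) * P0 $ i + t / real CARD('d)" for i
    by (simp add: P1_def u_def algebra_simps)
  then have "P1 $ i > 0" for i
    using t Pnn[of i] by (simp add: add_nonneg_pos)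
  moreover have "(\<Sum>i\<in>UNIV. P1 $ i) = 1"
    using Psum by (simp add: P1_def u_def sum.distrib sum_subtractf flip: sum_distrib_left)
  moreover have "norm (P1 - P0) < \<rho>"
  proof -
    have "norm (P1 - P0) = t * norm (u - P0)" using t by (simp add: P1_def)
    also have "\<dots> \<le> \<rho> / (norm (u - P0) + 1) * norm (u - P0)"
      by (intro mult_right_mono) (auto simp: t_def)
    also have "\<dots> = \<rho> * (norm (u - P0) / (norm (u - P0) + 1))" by simp
    also have "\<dots> < \<rho> * 1"
      using \<rho> by (intro mult_strict_left_mono) (simp_all add: add_nonneg_pos)
    finally show ?thesis by simp
  qed
  ultimately show ?thesis by (auto simp: prob_simplex_int_def)
qed

lemma loss_bounded:
  fixes l :: "'x::euclidean_space \<Rightarrow> 'd::finite \<Rightarrow> real"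
  assumes "compact X" and "\<And>i. continuous_on X (\<lambda>x. l x i)"
  obtains B where "B > 0" "\<And>x i. x \<in> X \<Longrightarrow> \<bar>l x i\<bar> \<le> B"
proof -
  have "compact ((\<lambda>x. \<chi> i. l x i) ` X)"
    by (intro compact_continuous_image continuous_on_vec_lambda assms)
  then obtain B where "B > 0" "\<And>x. x \<in> X \<Longrightarrow> norm (\<chi> i. l x i) \<le> B"
    using compact_imp_bounded bounded_pos by (metis image_eqI)
  then show ?thesis
    using that component_le_norm_cart[of "\<chi> i. l _ i"] by (metis order_trans real_norm_def vec_lambda_beta)
qed

lemma equicont_prediction_error:
  fixes l :: "'x::euclidean_space \<Rightarrow> 'd::finite \<Rightarrow> real"
    and chat :: "'x \<Rightarrow> real ^ 'd \<Rightarrow> nat \<Rightarrow> real"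
  assumes l_cont: "\<And>i. continuous_on X (\<lambda>x. l x i)" and reg: "regular X chat"
  shows "equicont (X \<times> prob_simplex) (\<lambda>T (x, p). chat x p T - cost l x p)"
proof -
  have "equicont (X \<times> prob_simplex) (\<lambda>T (x, p). chat x p T)" using reg by (simp add: regular_def)
  moreover have "equicont (X \<times> prob_simplex) (\<lambda>T. \<lambda>(x, p). cost l x p)"
    by (intro equicont_continuous_on continuous_on_cost l_cont)
  ultimately have "equicont (X \<times> prob_simplex)
                     (\<lambda>T y. (\<lambda>T (x, p). chat x p T) T y + - (\<lambda>(x, p). cost l x p) y)"
    by (intro equicont_add equicont_uminus)
  then show ?thesis by (simp add: split_beta')
qed

lemma frequently_far_at_interior_point:
  fixes l :: "'x::euclidean_space \<Rightarrow> 'd::finite \<Rightarrow> real"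
    and chat :: "'x \<Rightarrow> real ^ 'd \<Rightarrow> nat \<Rightarrow> real"
  assumes l_cont: "\<And>i. continuous_on X (\<lambda>x. l x i)" and reg: "regular X chat"
    and x0: "x0 \<in> X" and P0: "P0 \<in> prob_simplex"
    and diverges: "\<not> (\<lambda>T. chat x0 P0 T) \<longlonglongrightarrow> cost l x0 P0"
  obtains P1 \<delta> where "P1 \<in> prob_simplex_int" "\<delta> > 0"
    "frequently (\<lambda>T. \<bar>chat x0 P1 T - cost l x0 P1\<bar> \<ge> 4 * \<delta>) sequentially"
proof -
  define S where "S = X \<times> (prob_simplex :: (real ^ 'd) set)"
  define err where "err = (\<lambda>T (x, p). chat x p T - cost l x p)"
  obtain \<epsilon> where \<epsilon>: "\<epsilon> > 0"
    and "\<not> eventually (\<lambda>T. dist (chat x0 P0 T) (cost l x0 P0) < \<epsilon>) sequentially"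
    using diverges unfolding tendsto_iff by blast
  then have far: "frequently (\<lambda>T. \<bar>err T (x0, P0)\<bar> \<ge> \<epsilon>) sequentially"
    by (simp add: err_def not_eventually dist_real_def not_less)
  have "equicont S err"
    unfolding S_def err_def by (rule equicont_prediction_error[OF l_cont reg])
  moreover have "(x0, P0) \<in> S" "\<epsilon> / 2 > 0" using x0 P0 \<epsilon> by (simp_all add: S_def)
  ultimately obtain U where U: "open U" "(x0, P0) \<in> U"
      and close: "\<forall>T. \<forall>z\<in>U \<inter> S. dist (err T (x0, P0)) (err T z) < \<epsilon> / 2"
    unfolding equicont_def by blast
  obtain r where r: "r > 0" "ball (x0, P0) r \<subseteq> U" using U open_contains_ball by blast
  obtain P1 where P1: "P1 \<in> prob_simplex_int" "norm (P1 - P0) < r"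
    using exists_prob_simplex_int_near[OF P0 r(1)] by blast
  have P1_close: "(x0, P1) \<in> U \<inter> S"
    using r(2) P1 x0 prob_simplex_int_subset
    by (auto simp: S_def dist_Pair_Pair dist_norm norm_minus_commute)
  have "frequently (\<lambda>T. \<bar>err T (x0, P1)\<bar> \<ge> 4 * (\<epsilon> / 8)) sequentially"
    using far
  proof (rule frequently_elim1)
    fix T assume "\<bar>err T (x0, P0)\<bar> \<ge> \<epsilon>"
    moreover have "\<bar>err T (x0, P0) - err T (x0, P1)\<bar> < \<epsilon> / 2"
      using close P1_close by (simp add: dist_real_def)
    ultimately show "\<bar>err T (x0, P1)\<bar> \<ge> 4 * (\<epsilon> / 8)" by linarith
  qed
  then show ?thesis
    using that[OF P1(1), of "\<epsilon> / 8"] \<epsilon> unfolding err_def by simp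
qed

lemma oos_guarantee_raise:
  fixes l :: "'x \<Rightarrow> 'd::finite \<Rightarrow> real" and chat t :: "'x \<Rightarrow> real ^ 'd \<Rightarrow> nat \<Rightarrow> real"
  assumes a_pos: "\<And>T. a T > 0" and a_inf: "filterlim a at_top sequentially"
    and oos: "oos_guarantee X l a chat" and \<delta>: "\<delta> > 0"
  shows "oos_guarantee X l a (\<lambda>x p T. chat x p T + smooth_pos \<delta> (t x p T - chat x p T))"
proof (rule oos_guarantee_if_failure_covered[OF a_pos a_inf oos, where E = "\<lambda>_ _ _ _. False"])
  fix x P T \<omega>
  have "chat x (empirical \<omega> T) T \<le> chat x (empirical \<omega> T) T
          + smooth_pos \<delta> (t x (empirical \<omega> T) T - chat x (empirical \<omega> T) T)"
    by (rule smooth_pos_raise_bounds(1)[OF \<delta>])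
  then show "cost l x P > chat x (empirical \<omega> T) T
               + smooth_pos \<delta> (t x (empirical \<omega> T) T - chat x (empirical \<omega> T) T)
             \<Longrightarrow> cost l x P > chat x (empirical \<omega> T) T \<or> False"
    by simp
qed simp

definition deviation_margin :: "real \<Rightarrow> (nat \<Rightarrow> real) \<Rightarrow> nat \<Rightarrow> real" where
  "deviation_margin B a T = 2 * B * sqrt (8 * (a T / real T))"

lemma deviation_margin_nonneg: "B \<ge> 0 \<Longrightarrow> a T \<ge> 0 \<Longrightarrow> deviation_margin B a T \<ge> 0"
  by (simp add: deviation_margin_def)

lemma deviation_margin_tendsto_0:
  assumes "(\<lambda>T. a T / real T) \<longlonglongrightarrow> 0"
  shows "deviation_margin B a \<longlonglongrightarrow> 0"
proof -
  have "(\<lambda>T. 2 * B * sqrt (8 * (a T / real T))) \<longlonglongrightarrow> 2 * B * sqrt (8 * 0)"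
    by (intro tendsto_intros assms)
  then show ?thesis by (simp add: deviation_margin_def[abs_def])
qed

lemma oos_guarantee_lower:
  fixes l :: "'x \<Rightarrow> 'd::finite \<Rightarrow> real" and chat :: "'x \<Rightarrow> real ^ 'd \<Rightarrow> nat \<Rightarrow> real"
  assumes l_bound: "\<And>x i. x \<in> X \<Longrightarrow> \<bar>l x i\<bar> \<le> B" and B: "B > 0"
    and a_pos: "\<And>T. a T > 0" and a_inf: "filterlim a at_top sequentially"
    and a_subexp: "(\<lambda>T. a T / real T) \<longlonglongrightarrow> 0"
    and oos: "oos_guarantee X l a chat" and \<delta>: "\<delta> > 0"
  shows "oos_guarantee X l a (\<lambda>x p T. chat x p T
           - smooth_pos \<delta> (chat x p T - (cost l x p + deviation_margin B a T)))"
proof (rule oos_guarantee_if_failure_covered[OF a_pos a_inf oos,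
      where E = "\<lambda>x P T \<omega>. cost l x P > cost l x (empirical \<omega> T) + deviation_margin B a T"])
  fix x P T \<omega>
  let ?u = "chat x (empirical \<omega> T) T" and ?v = "cost l x (empirical \<omega> T) + deviation_margin B a T"
  have "min ?u ?v \<le> ?u - smooth_pos \<delta> (?u - ?v)" by (rule smooth_pos_lower_bounds(1)[OF \<delta>])
  then show "cost l x P > ?u - smooth_pos \<delta> (?u - ?v) \<Longrightarrow> cost l x P > ?u \<or> cost l x P > ?v"
    by linarith
next
  fix x and P :: "real ^ 'd" assume "x \<in> X" "P \<in> prob_simplex_int"
  then show "eventually (\<lambda>T. prob_iid P T (\<lambda>\<omega>. cost l x P > cost l x (empirical \<omega> T)
               + deviation_margin B a T) \<le> exp (- 2 * a T)) sequentially"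
    unfolding deviation_margin_def using prob_simplex_int_subset
    by (intro eventually_prob_iid_cost_deviation_le l_bound B a_pos a_subexp) auto
qed

definition strictly_dominated ::
  "'x::euclidean_space set \<Rightarrow> ('x \<Rightarrow> 'd::finite \<Rightarrow> real) \<Rightarrow> (nat \<Rightarrow> real) \<Rightarrow>
     ('x \<Rightarrow> real ^ 'd \<Rightarrow> nat \<Rightarrow> real) \<Rightarrow> bool" where
  "strictly_dominated X l a chat \<longleftrightarrow>
     (\<exists>chat'. regular X chat' \<and> oos_guarantee X l a chat' \<and>
        pred_le X l chat' chat \<and> \<not> pred_equiv X l chat' chat)"

lemma strictly_dominated_if_frequently_below:
  fixes l :: "'x::euclidean_space \<Rightarrow> 'd::finite \<Rightarrow> real"
    and chat :: "'x \<Rightarrow> real ^ 'd \<Rightarrow> nat \<Rightarrow> real"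
  assumes l_cont: "\<And>i. continuous_on X (\<lambda>x. l x i)"
    and l_bound: "\<And>x i. x \<in> X \<Longrightarrow> \<bar>l x i\<bar> \<le> B"
    and a_pos: "\<And>T. a T > 0" and a_inf: "filterlim a at_top sequentially"
    and reg: "regular X chat" and oos: "oos_guarantee X l a chat"
    and x0: "x0 \<in> X" and P1: "P1 \<in> prob_simplex_int" and \<delta>: "\<delta> > 0"
    and below: "frequently (\<lambda>T. chat x0 P1 T - cost l x0 P1 \<le> - (4 * \<delta>)) sequentially"
  shows "strictly_dominated X l a chat"
proof -
  define chat' where "chat' x p T = chat x p T + smooth_pos \<delta> (cost l x p - 2 * \<delta> - chat x p T)" for x p T
  have "regular X (\<lambda>x p T. cost l x p - 2 * \<delta>)"
    using regular_cost_add[OF l_cont l_bound, of "\<lambda>_. - 2 * \<delta>"] by simp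
  then have "regular X chat'"
    unfolding chat'_def by (intro regular_add[OF reg] regular_smooth_pos[OF _ \<delta>] regular_diff[OF _ reg])
  moreover have "oos_guarantee X l a chat'"
    unfolding chat'_def[abs_def] by (rule oos_guarantee_raise[OF a_pos a_inf oos \<delta>])
  moreover have "pred_le X l chat' chat \<and> \<not> pred_equiv X l chat' chat"
  proof (rule pred_le_and_not_pred_equiv[OF _ x0 P1, where k = "5/8"])
    show "err_ratio (chat' x P T - cost l x P) (chat x P T - cost l x P) \<le> 1" for x P T
      using smooth_pos_raise_bounds[OF \<delta>, of "chat x P T" "cost l x P - 2 * \<delta>"] \<delta>
      by (intro err_ratio_le_1_if_between) (auto simp: chat'_def)
    show "frequently (\<lambda>T. err_ratio (chat' x0 P1 T - cost l x0 P1) (chat x0 P1 T - cost l x0 P1)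
            \<le> ereal (5/8)) sequentially"
      using below
    proof (rule frequently_elim1)
      fix T assume "chat x0 P1 T - cost l x0 P1 \<le> - (4 * \<delta>)"
      moreover from this have "chat' x0 P1 T - cost l x0 P1 = - (5/2 * \<delta>)"
        using \<delta> by (simp add: chat'_def smooth_pos_eq_shift)
      ultimately show "err_ratio (chat' x0 P1 T - cost l x0 P1) (chat x0 P1 T - cost l x0 P1) \<le> ereal (5/8)"
        using \<delta> by (intro err_ratio_le_if_abs_le) auto
    qed
  qed simp
  ultimately show ?thesis unfolding strictly_dominated_def by blast
qed

lemma strictly_dominated_if_frequently_above:
  fixes l :: "'x::euclidean_space \<Rightarrow> 'd::finite \<Rightarrow> real"
    and chat :: "'x \<Rightarrow> real ^ 'd \<Rightarrow> nat \<Rightarrow> real"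
  assumes l_cont: "\<And>i. continuous_on X (\<lambda>x. l x i)"
    and l_bound: "\<And>x i. x \<in> X \<Longrightarrow> \<bar>l x i\<bar> \<le> B" and B: "B > 0"
    and a_pos: "\<And>T. a T > 0" and a_inf: "filterlim a at_top sequentially"
    and a_subexp: "(\<lambda>T. a T / real T) \<longlonglongrightarrow> 0"
    and reg: "regular X chat" and oos: "oos_guarantee X l a chat"
    and x0: "x0 \<in> X" and P1: "P1 \<in> prob_simplex_int" and \<delta>: "\<delta> > 0"
    and above: "frequently (\<lambda>T. chat x0 P1 T - cost l x0 P1 \<ge> 4 * \<delta>) sequentially"
  shows "strictly_dominated X l a chat"
proof -
  define r where "r = deviation_margin B a"
  have r_nonneg: "r T \<ge> 0" for T
    using a_pos[of T] B by (simp add: r_def deviation_margin_nonneg)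
  have r_lim: "r \<longlonglongrightarrow> 0" unfolding r_def by (rule deviation_margin_tendsto_0[OF a_subexp])
  define chat' where "chat' x p T = chat x p T - smooth_pos \<delta> (chat x p T - (cost l x p + r T))" for x p T
  have "regular X chat'"
    unfolding chat'_def using r_lim
    by (intro regular_diff[OF reg] regular_smooth_pos[OF _ \<delta>]
        regular_diff[OF reg regular_cost_add[OF l_cont l_bound]] convergent_imp_Bseq convergentI)
  moreover have "oos_guarantee X l a chat'"
    unfolding chat'_def[abs_def] r_def by (rule oos_guarantee_lower[OF l_bound B a_pos a_inf a_subexp oos \<delta>])
  moreover have "pred_le X l chat' chat \<and> \<not> pred_equiv X l chat' chat"
  proof (rule pred_le_and_not_pred_equiv[OF _ x0 P1, where k = "5/8"])
    show "err_ratio (chat' x P T - cost l x P) (chat x P T - cost l x P) \<le> 1" for x P T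
      using smooth_pos_lower_bounds[OF \<delta>, of "chat x P T" "cost l x P + r T"] r_nonneg[of T]
      by (intro err_ratio_le_1_if_between) (auto simp: chat'_def)
    have "eventually (\<lambda>T. r T < \<delta>) sequentially" using order_tendstoD(2)[OF r_lim \<delta>] .
    with above have "frequently (\<lambda>T. r T < \<delta> \<and> chat x0 P1 T - cost l x0 P1 \<ge> 4 * \<delta>) sequentially"
      by (rule frequently_eventually_conj)
    then show "frequently (\<lambda>T. err_ratio (chat' x0 P1 T - cost l x0 P1) (chat x0 P1 T - cost l x0 P1)
            \<le> ereal (5/8)) sequentially"
    proof (rule frequently_elim1)
      fix T assume T: "r T < \<delta> \<and> chat x0 P1 T - cost l x0 P1 \<ge> 4 * \<delta>"
      then have "chat' x0 P1 T - cost l x0 P1 = r T + \<delta> / 2"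
        using \<delta> by (simp add: chat'_def smooth_pos_eq_shift)
      then show "err_ratio (chat' x0 P1 T - cost l x0 P1) (chat x0 P1 T - cost l x0 P1) \<le> ereal (5/8)"
        using T \<delta> r_nonneg[of T] by (intro err_ratio_le_if_abs_le) auto
    qed
  qed simp
  ultimately show ?thesis unfolding strictly_dominated_def by blast
qed

theorem mainTheorem3:
  fixes X :: "'x::euclidean_space set"
    and l :: "'x \<Rightarrow> 'd::finite \<Rightarrow> real"
    and a :: "nat \<Rightarrow> real"
    and chat :: "'x \<Rightarrow> real ^ 'd \<Rightarrow> nat \<Rightarrow> real"
  assumes d2: "CARD('d) \<ge> 2"
    and X_compact: "compact X"
    and l_cont: "\<And>i. continuous_on X (\<lambda>x. l x i)"
    and a_pos: "\<And>T. a T > 0"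
    and a_inf: "filterlim a at_top sequentially"
    and a_subexp: "(\<lambda>T. a T / real T) \<longlonglongrightarrow> 0"
    and reg: "regular X chat"
    and oos: "oos_guarantee X l a chat"
  shows "(\<forall>x\<in>X. \<forall>P\<in>prob_simplex. (\<lambda>T. chat x P T) \<longlonglongrightarrow> cost l x P)
         \<or> (\<exists>chat' :: 'x \<Rightarrow> real ^ 'd \<Rightarrow> nat \<Rightarrow> real.
               regular X chat' \<and> oos_guarantee X l a chat' \<and>
               pred_le X l chat' chat \<and> \<not> pred_equiv X l chat' chat)"
proof (cases "\<forall>x\<in>X. \<forall>P\<in>prob_simplex. (\<lambda>T. chat x P T) \<longlonglongrightarrow> cost l x P")
  case False
  then obtain x0 P0 where x0: "x0 \<in> X" and "P0 \<in> prob_simplex"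
    and "\<not> (\<lambda>T. chat x0 P0 T) \<longlonglongrightarrow> cost l x0 P0" by blast
  then obtain P1 \<delta> where P1: "P1 \<in> prob_simplex_int" and \<delta>: "\<delta> > 0"
    and far: "frequently (\<lambda>T. \<bar>chat x0 P1 T - cost l x0 P1\<bar> \<ge> 4 * \<delta>) sequentially"
    by (rule frequently_far_at_interior_point[OF l_cont reg])
  from far have "frequently (\<lambda>T. chat x0 P1 T - cost l x0 P1 \<le> - (4 * \<delta>)
                            \<or> chat x0 P1 T - cost l x0 P1 \<ge> 4 * \<delta>) sequentially"
    by (rule frequently_elim1) (simp add: abs_le_iff abs_if split: if_splits)
  then have "frequently (\<lambda>T. chat x0 P1 T - cost l x0 P1 \<le> - (4 * \<delta>)) sequentially
           \<or> frequently (\<lambda>T. chat x0 P1 T - cost l x0 P1 \<ge> 4 * \<delta>) sequentially"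
    by (simp only: frequently_disj_iff)
  then have "strictly_dominated X l a chat"
  proof
    obtain B where "B > 0" and l_bound: "\<And>x i. x \<in> X \<Longrightarrow> \<bar>l x i\<bar> \<le> B"
      using loss_bounded[of X l, OF X_compact l_cont] by blast
    show ?thesis if "frequently (\<lambda>T. chat x0 P1 T - cost l x0 P1 \<le> - (4 * \<delta>)) sequentially"
      by (rule strictly_dominated_if_frequently_below[OF l_cont l_bound a_pos a_inf reg oos x0 P1 \<delta> that])
    show ?thesis if "frequently (\<lambda>T. chat x0 P1 T - cost l x0 P1 \<ge> 4 * \<delta>) sequentially"
      by (rule strictly_dominated_if_frequently_above[OF l_cont l_bound \<open>B > 0\<close> a_pos a_inf a_subexp
            reg oos x0 P1 \<delta> that])
  qed
  then show ?thesis unfolding strictly_dominated_def by blast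
qed blast

end
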